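(* Let $P$ and $C$ be causal stable systems on $\mathcal{L}_{2e+}^n$ such that the feedback system $P\#C$ is well-posed. If $\theta_e(P)+\theta_e(C)<\pi$, then $P\#C|_{e_2=0}$ is stable.
   Context: $\mathcal{L}_2^n$: measurable $u:\mathbb{R}\to\mathbb{R}^n$ with $\|u\|_2^2=\int|u(t)|^2dt<\infty$, inner product $\langle u,v\rangle=\int u(t)^Tv(t)\,dt$; $\mathcal{L}_{2+}=\{u\in\mathcal{L}_2:u(t)=0\ \text{for}\ t<0\}$. For $T\ge0$, $(\Gamma_Tu)(t)=u(t)$ for $t\le T$, $0$ for $t>T$, $u_T=\Gamma_Tu$; $\mathcal{L}_{2e+}=\{u:u_T\in\mathcal{L}_{2+}\ \forall T\ge0\}$. A system is an operator $P:\mathcal{L}_{2e+}\to\mathcal{L}_{2e+}$ with $P0=0$, $P\ne0$; causal if $\Gamma_TP=\Gamma_TP\Gamma_T$ for all $T\ge0$; a causal system is stable if $Pu\in\mathcal{L}_{2+}$ for all $u\in\mathcal{L}_{2+}$ and $\sup_{0\ne u\in\mathcal{L}_{2+}}\|Pu\|_2/\|u\|_2<\infty$. The $\mathcal{L}_{2e}$ singular angle $\theta_e(P)\in[0,\pi]$ is given by $\cos\theta_e(P)=\inf\{\langle u_T,(Pu)_T\rangle/(\|u_T\|_2\|(Pu)_T\|_2): u\in\mathcal{L}_{2e+},\ T>0,\ \|u_T\|_2\ne0,\ \|(Pu)_T\|_2\ne0\}$. The feedback system $P\#C$: $u_1=e_1-y_2$, $u_2=e_2+y_1$, $y_1=Pu_1$,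 $y_2=Cu_2$; well-posed if $(u_1,u_2)\mapsto(u_1+Cu_2,\ u_2-Pu_1)$ has a causal inverse on $\mathcal{L}_{2e+}\times\mathcal{L}_{2e+}$. $P\#C|_{e_2=0}$ is the loop with $e_2=0$; it is stable if there is $c>0$ with $\|\Gamma_T(u_1,u_2)\|_2\le c\|\Gamma_Te\|_2$ for all $T\ge0$ and all $e=(e_1,0)$, $e_1\in\mathcal{L}_{2e+}$. *)

theory Defs
  imports "HOL-Analysis.Analysis"
begin

type_synonym 'n signal = "real \<Rightarrow> real^'n"

definition L2 :: "'n::finite signal set" where
  "L2 = {u. u \<in> borel_measurable lebesgue \<and> integrable lebesgue (\<lambda>t. (norm (u t))\<^sup>2)}"

definition L2_inner :: "'n::finite signal \<Rightarrow> 'n signal \<Rightarrow> real" where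
  "L2_inner u v = (LINT t|lebesgue. u t \<bullet> v t)"

definition L2_norm :: "'n::finite signal \<Rightarrow> real" where
  "L2_norm u = sqrt (LINT t|lebesgue. (norm (u t))\<^sup>2)"

definition L2p :: "'n::finite signal set" where
  "L2p = {u. u \<in> L2 \<and> (\<forall>t<0. u t = 0)}"

definition trunc :: "real \<Rightarrow> 'n::finite signal \<Rightarrow> 'n signal" where
  "trunc T u = (\<lambda>t. if t \<le> T then u t else 0)"

definition L2ep :: "'n::finite signal set" where
  "L2ep = {u. \<forall>T\<ge>0. trunc T u \<in> L2p}"

definition is_system :: "('n::finite signal \<Rightarrow> 'n signal) \<Rightarrow> bool" where
  "is_system P \<longleftrightarrow> (\<forall>u\<in>L2ep. P u \<in> L2ep) \<and> P (\<lambda>t. 0) = (\<lambda>t. 0)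
     \<and> (\<exists>u\<in>L2ep. \<exists>T\<ge>0. L2_norm (trunc T (P u)) \<noteq> 0)"

definition causal :: "('n::finite signal \<Rightarrow> 'n signal) \<Rightarrow> bool" where
  "causal P \<longleftrightarrow> (\<forall>T\<ge>0. \<forall>u\<in>L2ep. trunc T (P u) = trunc T (P (trunc T u)))"

definition stable :: "('n::finite signal \<Rightarrow> 'n signal) \<Rightarrow> bool" where
  "stable P \<longleftrightarrow> causal P \<and> (\<forall>u\<in>L2p. P u \<in> L2p)
     \<and> bdd_above {L2_norm (P u) / L2_norm u | u. u \<in> L2p \<and> L2_norm u \<noteq> 0}"

definition singular_angle_e :: "('n::finite signal \<Rightarrow> 'n signal) \<Rightarrow> real" where
  "singular_angle_e P = arccos (Inf
     {L2_inner (trunc T u) (trunc T (P u)) / (L2_norm (trunc T u) * L2_norm (trunc T (P u))) | u T.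
        u \<in> L2ep \<and> T > 0 \<and> L2_norm (trunc T u) \<noteq> 0 \<and> L2_norm (trunc T (P u)) \<noteq> 0})"

definition trunc2 :: "real \<Rightarrow> 'n::finite signal \<times> 'n signal \<Rightarrow> 'n signal \<times> 'n signal" where
  "trunc2 T x = (trunc T (fst x), trunc T (snd x))"

definition L2_norm2 :: "'n::finite signal \<times> 'n signal \<Rightarrow> real" where
  "L2_norm2 x = sqrt ((L2_norm (fst x))\<^sup>2 + (L2_norm (snd x))\<^sup>2)"

definition well_posed :: "('n::finite signal \<Rightarrow> 'n signal) \<Rightarrow> ('n signal \<Rightarrow> 'n signal) \<Rightarrow> bool" where
  "well_posed P C \<longleftrightarrow>
    (let F = (\<lambda>(u1, u2). ((\<lambda>t. u1 t + C u2 t), (\<lambda>t. u2 t - P u1 t))) in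
     \<exists>G. (\<forall>e \<in> L2ep \<times> L2ep. G e \<in> L2ep \<times> L2ep \<and> F (G e) = e)
       \<and> (\<forall>u \<in> L2ep \<times> L2ep. G (F u) = u)
       \<and> (\<forall>T\<ge>0. \<forall>e \<in> L2ep \<times> L2ep. trunc2 T (G e) = trunc2 T (G (trunc2 T e))))"

definition stable_e2_zero :: "('n::finite signal \<Rightarrow> 'n signal) \<Rightarrow> ('n signal \<Rightarrow> 'n signal) \<Rightarrow> bool" where
  "stable_e2_zero P C \<longleftrightarrow>
    (\<exists>c>0. \<forall>T\<ge>0. \<forall>e1 u1 u2. e1 \<in> L2ep \<and> u1 \<in> L2ep \<and> u2 \<in> L2ep
        \<and> e1 = (\<lambda>t. u1 t + C u2 t) \<and> (\<lambda>t. 0) = (\<lambda>t. u2 t - P u1 t) \<longrightarrow>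
        L2_norm2 (trunc2 T (u1, u2)) \<le> c * L2_norm2 (trunc2 T (e1, \<lambda>t. 0)))"

end

theory Submission
  imports Defs
begin

(* Along the loop u2 = P u1 and e1 = u1 + C u2, so on a horizon T the truncations a = u1_T,
   b = (P u1)_T and c = (C u2)_T satisfy (e1)_T = a + c.  The L2 angle from a to b is at most
   theta_e(P) and the angle from b to c is at most theta_e(C); since angles between L2 signals
   satisfy the triangle inequality, the angle from a to c is at most
   theta = theta_e(P) + theta_e(C) < pi.  Hence <a,c> >= cos theta |a| |c| and
   |a + c|^2 >= min 1 (1 + cos theta) |a|^2 with a positive constant.  A stable causal P has
   finite gain on truncations, |b| <= g |a|, so |(u1,u2)_T| is bounded by a fixed multiple
   of |(e1)_T|. *)

lemma L2_scaleR_add: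
  fixes u v :: "'n::finite signal"
  assumes "u \<in> L2" "v \<in> L2"
  shows "(\<lambda>t. a *\<^sub>R u t + b *\<^sub>R v t) \<in> L2"
proof -
  have meas: "(\<lambda>t. a *\<^sub>R u t + b *\<^sub>R v t) \<in> borel_measurable lebesgue"
    using assms unfolding L2_def by (auto intro: borel_measurable_add borel_measurable_scaleR)
  have bound: "(norm (a *\<^sub>R u t + b *\<^sub>R v t))\<^sup>2 \<le> 2 * a\<^sup>2 * (norm (u t))\<^sup>2 + 2 * b\<^sup>2 * (norm (v t))\<^sup>2"
    for t
  proof -
    have "norm (a *\<^sub>R u t + b *\<^sub>R v t) \<le> \<bar>a\<bar> * norm (u t) + \<bar>b\<bar> * norm (v t)"
      using norm_triangle_ineq[of "a *\<^sub>R u t" "b *\<^sub>R v t"] by simp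
    then have "(norm (a *\<^sub>R u t + b *\<^sub>R v t))\<^sup>2 \<le> (\<bar>a\<bar> * norm (u t) + \<bar>b\<bar> * norm (v t))\<^sup>2"
      by (simp add: power_mono)
    also have "\<dots> \<le> 2 * a\<^sup>2 * (norm (u t))\<^sup>2 + 2 * b\<^sup>2 * (norm (v t))\<^sup>2"
      using zero_le_power2[of "\<bar>a\<bar> * norm (u t) - \<bar>b\<bar> * norm (v t)"]
      by (simp add: power2_diff power2_sum power_mult_distrib)
    finally show ?thesis .
  qed
  have "integrable lebesgue (\<lambda>t. (norm (a *\<^sub>R u t + b *\<^sub>R v t))\<^sup>2)"
    by (rule Bochner_Integration.integrable_bound[where f = "\<lambda>t. 2 * a\<^sup>2 * (norm (u t))\<^sup>2 + 2 * b\<^sup>2 * (norm (v t))\<^sup>2"])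
       (use assms meas bound in \<open>auto simp: L2_def\<close>)
  with meas show ?thesis
    by (simp add: L2_def)
qed

lemma L2_integrable_inner:
  fixes u v :: "'n::finite signal"
  assumes "u \<in> L2" "v \<in> L2"
  shows "integrable lebesgue (\<lambda>t. u t \<bullet> v t)"
proof (rule Bochner_Integration.integrable_bound)
  show "integrable lebesgue (\<lambda>t. (norm (u t))\<^sup>2 + (norm (v t))\<^sup>2)"
    using assms by (simp add: L2_def)
  show "(\<lambda>t. u t \<bullet> v t) \<in> borel_measurable lebesgue"
    using assms unfolding L2_def by (auto intro: borel_measurable_inner)
  have "\<bar>u t \<bullet> v t\<bar> \<le> (norm (u t))\<^sup>2 + (norm (v t))\<^sup>2" for t
    using Cauchy_Schwarz_ineq2[of "u t" "v t"] zero_le_power2[of "norm (u t) - norm (v t)"]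
      mult_nonneg_nonneg[OF norm_ge_zero norm_ge_zero, of "u t" "v t"]
    by (simp add: power2_diff)
  then show "AE t in lebesgue. norm (u t \<bullet> v t) \<le> norm ((norm (u t))\<^sup>2 + (norm (v t))\<^sup>2)"
    by simp
qed

lemma L2_inner_scaleR_add:
  fixes u1 u2 v1 v2 :: "'n::finite signal"
  assumes "u1 \<in> L2" "u2 \<in> L2" "v1 \<in> L2" "v2 \<in> L2"
  shows "L2_inner (\<lambda>t. a *\<^sub>R u1 t + b *\<^sub>R u2 t) (\<lambda>t. c *\<^sub>R v1 t + d *\<^sub>R v2 t)
    = a * c * L2_inner u1 v1 + a * d * L2_inner u1 v2 + b * c * L2_inner u2 v1 + b * d * L2_inner u2 v2"
proof -
  have expand: "(a *\<^sub>R u1 t + b *\<^sub>R u2 t) \<bullet> (c *\<^sub>R v1 t + d *\<^sub>R v2 t)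
     = ((a * c) * (u1 t \<bullet> v1 t) + (a * d) * (u1 t \<bullet> v2 t))
       + ((b * c) * (u2 t \<bullet> v1 t) + (b * d) * (u2 t \<bullet> v2 t))" for t
    by (simp add: algebra_simps)
  have int: "integrable lebesgue (\<lambda>t. k * (x t \<bullet> y t))"
    if "x \<in> L2" "y \<in> L2" for k and x y :: "'n signal"
    using L2_integrable_inner[OF that] by simp
  show ?thesis
    unfolding L2_inner_def expand
    by (subst Bochner_Integration.integral_add, (intro Bochner_Integration.integrable_add int assms)+)+
       simp
qed

lemma L2_inner_commute: "L2_inner u v = L2_inner v u"
  by (simp add: L2_inner_def inner_commute)

lemma L2_inner_self_nonneg: "0 \<le> L2_inner u u"
  unfolding L2_inner_def by (rule integral_nonneg_AE) simp

lemma L2_norm_eq_sqrt_inner: "L2_norm u = sqrt (L2_inner u u)"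
  by (simp add: L2_norm_def L2_inner_def power2_norm_eq_inner)

lemma L2_norm_power2: "(L2_norm u)\<^sup>2 = L2_inner u u"
  by (simp add: L2_norm_eq_sqrt_inner L2_inner_self_nonneg)

lemma L2_norm_nonneg: "0 \<le> L2_norm u"
  by (simp add: L2_norm_def)

lemma nonneg_quadratic_imp_discriminant_le:
  fixes a b c :: real
  assumes "0 \<le> c" and nonneg: "\<And>s. 0 \<le> a - 2 * s * b + s\<^sup>2 * c"
  shows "b\<^sup>2 \<le> a * c"
proof (cases "c = 0")
  case True
  have "0 \<le> a - 2 * ((a + 1) / (2 * b)) * b" if "b \<noteq> 0"
    using nonneg[of "(a + 1) / (2 * b)"] True by simp
  then show ?thesis
    using True by (cases "b = 0") auto
next
  case False
  with \<open>0 \<le> c\<close> have "0 < c" by simp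
  have "0 \<le> a - 2 * (b / c) * b + (b / c)\<^sup>2 * c"
    by (rule nonneg)
  also have "\<dots> = (a * c - b\<^sup>2) / c"
    using \<open>0 < c\<close> by (simp add: power2_eq_square field_simps)
  finally show ?thesis
    using \<open>0 < c\<close> by (simp add: zero_le_divide_iff)
qed

lemma L2_Cauchy_Schwarz:
  fixes u v :: "'n::finite signal"
  assumes "u \<in> L2" "v \<in> L2"
  shows "(L2_inner u v)\<^sup>2 \<le> L2_inner u u * L2_inner v v"
proof (rule nonneg_quadratic_imp_discriminant_le[OF L2_inner_self_nonneg])
  fix s
  have "0 \<le> L2_inner (\<lambda>t. 1 *\<^sub>R u t + (- s) *\<^sub>R v t) (\<lambda>t. 1 *\<^sub>R u t + (- s) *\<^sub>R v t)"
    by (rule L2_inner_self_nonneg)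
  also have "\<dots> = L2_inner u u - 2 * s * L2_inner u v + s\<^sup>2 * L2_inner v v"
    by (subst L2_inner_scaleR_add[OF assms assms])
       (simp add: L2_inner_commute[of v u] power2_eq_square)
  finally show "0 \<le> L2_inner u u - 2 * s * L2_inner u v + s\<^sup>2 * L2_inner v v" .
qed

lemma L2_Cauchy_Schwarz_abs:
  fixes u v :: "'n::finite signal"
  assumes "u \<in> L2" "v \<in> L2"
  shows "\<bar>L2_inner u v\<bar> \<le> L2_norm u * L2_norm v"
  using real_sqrt_le_mono[OF L2_Cauchy_Schwarz[OF assms]]
  by (simp add: L2_norm_eq_sqrt_inner real_sqrt_mult)

lemma L2_norm_add_power2:
  fixes u v :: "'n::finite signal"
  assumes "u \<in> L2" "v \<in> L2"
  shows "(L2_norm (\<lambda>t. u t + v t))\<^sup>2 = (L2_norm u)\<^sup>2 + 2 * L2_inner u v + (L2_norm v)\<^sup>2"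
  using L2_inner_scaleR_add[OF assms assms, of 1 1 1 1]
  by (simp add: L2_norm_power2 L2_inner_commute[of v u])

lemma L2_Gram_inequality:
  fixes a b c :: "'n::finite signal"
  assumes a: "a \<in> L2" and b: "b \<in> L2" and c: "c \<in> L2"
  shows "(L2_inner b b * L2_inner a c - L2_inner a b * L2_inner b c)\<^sup>2
    \<le> (L2_inner a a * L2_inner b b - (L2_inner a b)\<^sup>2) * (L2_inner b b * L2_inner c c - (L2_inner b c)\<^sup>2)"
    (is "?lhs \<le> ?rhs")
proof -
  define B where "B = L2_inner b b"
  \<comment> \<open>Cauchy-Schwarz for the components of a and c orthogonal to b, scaled by B.\<close>
  define p where "p = (\<lambda>t. B *\<^sub>R a t + (- L2_inner a b) *\<^sub>R b t)"
  define q where "q = (\<lambda>t. B *\<^sub>R c t + (- L2_inner b c) *\<^sub>R b t)"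
  have "p \<in> L2" "q \<in> L2"
    unfolding p_def q_def by (rule L2_scaleR_add[OF a b], rule L2_scaleR_add[OF c b])
  then have "(L2_inner p q)\<^sup>2 \<le> L2_inner p p * L2_inner q q"
    by (rule L2_Cauchy_Schwarz)
  moreover have "L2_inner p q = B * (B * L2_inner a c - L2_inner a b * L2_inner b c)"
    unfolding p_def q_def by (subst L2_inner_scaleR_add[OF a b c b]) (simp add: B_def algebra_simps)
  moreover have "L2_inner p p = B * (L2_inner a a * B - (L2_inner a b)\<^sup>2)"
    unfolding p_def by (subst L2_inner_scaleR_add[OF a b a b])
      (simp add: B_def L2_inner_commute[of b a] power2_eq_square algebra_simps)
  moreover have "L2_inner q q = B * (B * L2_inner c c - (L2_inner b c)\<^sup>2)"
    unfolding q_def by (subst L2_inner_scaleR_add[OF c b c b])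
      (simp add: B_def L2_inner_commute[of c b] power2_eq_square algebra_simps)
  ultimately have "B\<^sup>2 * ?lhs \<le> B\<^sup>2 * ?rhs"
    by (simp add: B_def power_mult_distrib power2_eq_square mult_ac)
  moreover have "?lhs = 0 \<and> ?rhs = 0" if "B = 0"
    using that L2_Cauchy_Schwarz[OF a b] L2_Cauchy_Schwarz[OF b c] by (simp add: B_def)
  ultimately show ?thesis
    by (cases "B = 0") auto
qed

(* If u or v has norm 0, division by zero makes the quotient 0 and the angle pi/2. *)
definition L2_angle :: "'n::finite signal \<Rightarrow> 'n signal \<Rightarrow> real" where
  "L2_angle u v = arccos (L2_inner u v / (L2_norm u * L2_norm v))"

lemma L2_cos_bounded:
  fixes u v :: "'n::finite signal"
  assumes "u \<in> L2" "v \<in> L2"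
  shows "\<bar>L2_inner u v / (L2_norm u * L2_norm v)\<bar> \<le> 1"
proof (cases "L2_norm u * L2_norm v = 0")
  case False
  then have "0 < L2_norm u * L2_norm v"
    using L2_norm_nonneg[of u] L2_norm_nonneg[of v] by (simp add: less_le)
  then show ?thesis
    using L2_Cauchy_Schwarz_abs[OF assms] by (simp add: abs_div)
qed auto

lemma
  fixes u v :: "'n::finite signal"
  assumes "u \<in> L2" "v \<in> L2"
  shows L2_angle_nonneg: "0 \<le> L2_angle u v"
    and L2_angle_le_pi: "L2_angle u v \<le> pi"
    and cos_L2_angle: "cos (L2_angle u v) = L2_inner u v / (L2_norm u * L2_norm v)"
  using L2_cos_bounded[OF assms] unfolding abs_le_iff L2_angle_def
  by (auto intro: arccos_lbound arccos_ubound)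

lemma cos_arccos_add_le:
  fixes x y z :: real
  assumes "\<bar>x\<bar> \<le> 1" "\<bar>y\<bar> \<le> 1" and gram: "(z - x * y)\<^sup>2 \<le> (1 - x\<^sup>2) * (1 - y\<^sup>2)"
  shows "cos (arccos x + arccos y) \<le> z"
proof -
  have "\<bar>z - x * y\<bar> \<le> sqrt (1 - x\<^sup>2) * sqrt (1 - y\<^sup>2)"
    using real_sqrt_le_mono[OF gram] by (simp add: real_sqrt_mult)
  moreover have "cos (arccos x + arccos y) = x * y - sqrt (1 - x\<^sup>2) * sqrt (1 - y\<^sup>2)"
    using assms by (simp add: cos_add sin_arccos abs_le_iff)
  ultimately show ?thesis
    by linarith
qed

lemma L2_angle_triangle:
  fixes a b c :: "'n::finite signal"
  assumes a: "a \<in> L2" and b: "b \<in> L2" and c: "c \<in> L2"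
    and nonzero: "L2_norm a \<noteq> 0" "L2_norm b \<noteq> 0" "L2_norm c \<noteq> 0"
  shows "L2_angle a c \<le> L2_angle a b + L2_angle b c"
proof -
  define A B C where "A = L2_norm a" and "B = L2_norm b" and "C = L2_norm c"
  define x y z where "x = L2_inner a b / (A * B)" and "y = L2_inner b c / (B * C)"
    and "z = L2_inner a c / (A * C)"
  have pos: "0 < A" "0 < B" "0 < C"
    using nonzero L2_norm_nonneg by (auto simp: A_def B_def C_def less_le)
  have "(z - x * y)\<^sup>2 = (B\<^sup>2 * L2_inner a c - L2_inner a b * L2_inner b c)\<^sup>2 / (A * B\<^sup>2 * C)\<^sup>2"
    using pos by (simp add: x_def y_def z_def power2_eq_square field_simps)
  also have "\<dots> \<le> (A\<^sup>2 * B\<^sup>2 - (L2_inner a b)\<^sup>2) * (B\<^sup>2 * C\<^sup>2 - (L2_inner b c)\<^sup>2) / (A * B\<^sup>2 * C)\<^sup>2"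
    using L2_Gram_inequality[OF a b c] by (simp add: A_def B_def C_def L2_norm_power2 divide_right_mono)
  also have "\<dots> = (1 - x\<^sup>2) * (1 - y\<^sup>2)"
    using pos by (simp add: x_def y_def power2_eq_square field_simps)
  finally have "(z - x * y)\<^sup>2 \<le> (1 - x\<^sup>2) * (1 - y\<^sup>2)" .
  moreover have "\<bar>x\<bar> \<le> 1" "\<bar>y\<bar> \<le> 1"
    unfolding x_def y_def A_def B_def C_def by (rule L2_cos_bounded[OF a b], rule L2_cos_bounded[OF b c])
  ultimately have "cos (arccos x + arccos y) \<le> z"
    by (intro cos_arccos_add_le)
  then have "cos (L2_angle a b + L2_angle b c) \<le> cos (L2_angle a c)"
    using cos_L2_angle[OF a c] by (simp add: L2_angle_def x_def y_def z_def A_def B_def C_def)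
  then show ?thesis
    using L2_angle_nonneg[OF a b] L2_angle_nonneg[OF b c] L2_angle_nonneg[OF a c] L2_angle_le_pi[OF a c]
    by (cases "L2_angle a b + L2_angle b c \<le> pi") (auto simp: cos_mono_le_eq)
qed

lemma L2_inner_ge_cos_mul_norm:
  fixes a c :: "'n::finite signal"
  assumes a: "a \<in> L2" and c: "c \<in> L2" and "L2_angle a c \<le> \<theta>" "\<theta> \<le> pi"
  shows "cos \<theta> * (L2_norm a * L2_norm c) \<le> L2_inner a c"
proof (cases "L2_norm a * L2_norm c = 0")
  case True
  then show ?thesis
    using L2_Cauchy_Schwarz_abs[OF a c] by auto
next
  case False
  have "cos \<theta> \<le> cos (L2_angle a c)"
    using assms L2_angle_nonneg[OF a c] by (simp add: cos_mono_le_eq)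
  then have "cos \<theta> * (L2_norm a * L2_norm c) \<le> cos (L2_angle a c) * (L2_norm a * L2_norm c)"
    by (simp add: mult_right_mono L2_norm_nonneg)
  then show ?thesis
    using False by (simp add: cos_L2_angle[OF a c])
qed

lemma trunc_add: "trunc T (\<lambda>t. u t + v t) = (\<lambda>t. trunc T u t + trunc T v t)"
  by (simp add: trunc_def fun_eq_iff)

lemma trunc_L2:
  fixes u :: "'n::finite signal"
  assumes "u \<in> L2"
  shows "trunc T u \<in> L2"
proof -
  have "trunc T u = (\<lambda>t. indicator {..T} t *\<^sub>R u t)"
    by (simp add: trunc_def fun_eq_iff indicator_def)
  then have meas: "trunc T u \<in> borel_measurable lebesgue"
    using assms unfolding L2_def by (auto intro!: borel_measurable_scaleR borel_measurable_indicator)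
  have "integrable lebesgue (\<lambda>t. (norm (trunc T u t))\<^sup>2)"
    by (rule Bochner_Integration.integrable_bound[where f = "\<lambda>t. (norm (u t))\<^sup>2"])
       (use assms meas in \<open>auto simp: L2_def trunc_def\<close>)
  with meas show ?thesis
    by (simp add: L2_def)
qed

lemma L2_norm_trunc_le:
  fixes u :: "'n::finite signal"
  assumes "u \<in> L2"
  shows "L2_norm (trunc T u) \<le> L2_norm u"
  unfolding L2_norm_def
  using trunc_L2[OF assms] assms
  by (intro real_sqrt_le_mono integral_mono) (auto simp: L2_def trunc_def)

lemma L2p_imp_L2ep:
  fixes u :: "'n::finite signal"
  assumes "u \<in> L2p"
  shows "u \<in> L2ep"
proof -
  have "trunc T u \<in> L2" for T
    using assms by (simp add: L2p_def trunc_L2)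
  moreover have "trunc T u t = 0" if "t < 0" for T t
    using assms that by (simp add: L2p_def trunc_def)
  ultimately show ?thesis
    by (simp add: L2ep_def L2p_def)
qed

lemma L2ep_trunc_L2: "u \<in> L2ep \<Longrightarrow> 0 \<le> T \<Longrightarrow> trunc T u \<in> L2"
  by (simp add: L2ep_def L2p_def)

lemma L2_norm_trunc_0:
  fixes u :: "'n::finite signal"
  assumes "u \<in> L2ep"
  shows "L2_norm (trunc 0 u) = 0"
proof -
  have vanish: "trunc 0 u t = 0" if "t \<noteq> 0" for t
    using assms that by (cases "t < 0") (auto simp: L2ep_def L2p_def trunc_def)
  have "AE t in lebesgue. t \<noteq> (0::real)"
    by (simp add: AE_completion AE_lborel_singleton)
  then have "AE t in lebesgue. (norm (trunc 0 u t))\<^sup>2 = 0"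
    by eventually_elim (simp add: vanish)
  then show ?thesis
    by (simp add: L2_norm_def integral_eq_zero_AE)
qed

lemma L2_unit_bump:
  fixes T :: real
  obtains f :: "'n::finite signal" where "f \<in> L2" "L2_inner f f = 1" "\<And>t. t \<le> T \<Longrightarrow> f t = 0"
proof
  define f :: "'n signal" where "f = (\<lambda>t. indicator {T<..T + 1} t *\<^sub>R axis undefined 1)"
  have square: "(\<lambda>t. f t \<bullet> f t) = indicator {T<..T + 1}"
    by (auto simp: f_def fun_eq_iff indicator_def inner_axis_axis)
  have "f \<in> borel_measurable lebesgue"
    unfolding f_def by (intro borel_measurable_scaleR borel_measurable_indicator) auto
  then show "f \<in> L2"
    unfolding L2_def by (simp add: power2_norm_eq_inner square)
  show "L2_inner f f = 1"
    by (simp add: L2_inner_def square)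
  show "f t = 0" if "t \<le> T" for t
    using that by (simp add: f_def)
qed

lemma stable_causalD:
  assumes "stable P" "0 \<le> T" "u \<in> L2ep"
  shows "trunc T (P u) = trunc T (P (trunc T u))"
  using assms unfolding stable_def causal_def by blast

lemma stable_L2:
  assumes "stable P" "u \<in> L2p"
  shows "P u \<in> L2"
  using assms by (simp add: stable_def L2p_def)

lemma stable_gain:
  fixes P :: "'n::finite signal \<Rightarrow> 'n signal"
  assumes "stable P"
  shows "\<exists>g\<ge>0. \<forall>w\<in>L2p. L2_norm w \<noteq> 0 \<longrightarrow> L2_norm (P w) \<le> g * L2_norm w"
proof -
  obtain B where B: "\<And>w. w \<in> L2p \<Longrightarrow> L2_norm w \<noteq> 0 \<Longrightarrow> L2_norm (P w) / L2_norm w \<le> B"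
    using assms unfolding stable_def bdd_above_def by blast
  have "L2_norm (P w) \<le> max B 0 * L2_norm w" if "w \<in> L2p" "L2_norm w \<noteq> 0" for w
  proof -
    have "0 < L2_norm w"
      using that L2_norm_nonneg[of w] by simp
    then have "L2_norm (P w) \<le> B * L2_norm w"
      using B[OF that] by (simp add: divide_le_eq)
    also have "\<dots> \<le> max B 0 * L2_norm w"
      using \<open>0 < L2_norm w\<close> by (simp add: mult_right_mono)
    finally show ?thesis .
  qed
  then show ?thesis
    by (intro exI[of _ "max B 0"]) auto
qed

lemma null_signal_extension:
  fixes v :: "'n::finite signal"
  assumes v: "v \<in> L2p" "trunc T v = v" "L2_norm v = 0" and "0 \<le> T" "0 < d"
  shows "\<exists>w\<in>L2p. trunc T w = v \<and> L2_norm w = d"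
proof -
  obtain f :: "'n signal" where f: "f \<in> L2" "L2_inner f f = 1" "\<And>t. t \<le> T \<Longrightarrow> f t = 0"
    using L2_unit_bump[where 'n = 'n and T = T] by blast
  have "v \<in> L2"
    using v by (simp add: L2p_def)
  have vv: "L2_inner v v = 0"
    using v L2_norm_power2[of v] by simp
  have vf: "L2_inner v f = 0"
    using L2_Cauchy_Schwarz[OF \<open>v \<in> L2\<close> f(1)] vv by simp
  define w where "w = (\<lambda>t. 1 *\<^sub>R v t + d *\<^sub>R f t)"
  have "w \<in> L2"
    unfolding w_def by (rule L2_scaleR_add[OF \<open>v \<in> L2\<close> f(1)])
  moreover have "w t = 0" if "t < 0" for t
    using that v(1) f(3) \<open>0 \<le> T\<close> by (simp add: L2p_def w_def)
  ultimately have "w \<in> L2p"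
    by (simp add: L2p_def)
  have "L2_inner w w = d\<^sup>2"
    unfolding w_def by (subst L2_inner_scaleR_add[OF \<open>v \<in> L2\<close> f(1) \<open>v \<in> L2\<close> f(1)])
      (simp add: vv vf f(2) L2_inner_commute[of f v] power2_eq_square)
  then have "L2_norm w = d"
    using \<open>0 < d\<close> by (simp add: L2_norm_eq_sqrt_inner)
  have v_beyond: "v t = 0" if "T < t" for t
    using fun_cong[OF v(2), of t] that by (simp add: trunc_def)
  have "trunc T w t = v t" for t
    using f(3)[of t] v_beyond[of t] by (cases "t \<le> T") (simp_all add: trunc_def w_def)
  then have "trunc T w = v"
    by (simp add: fun_eq_iff)
  with \<open>w \<in> L2p\<close> \<open>L2_norm w = d\<close> show ?thesis
    by blast
qed

(* The gain bound of a stable system says nothing about inputs of norm 0.  Extending such an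
   input by a small bump after T changes neither the input nor, by causality, the output up to T,
   but brings the gain bound into play. *)
lemma stable_trunc_output_null_input:
  fixes P :: "'n::finite signal \<Rightarrow> 'n signal"
  assumes "stable P"
    and v: "v \<in> L2p" "trunc T v = v" "L2_norm v = 0" and "0 \<le> T"
  shows "L2_norm (trunc T (P v)) = 0"
proof -
  obtain g where "0 \<le> g" and gain: "\<forall>w\<in>L2p. L2_norm w \<noteq> 0 \<longrightarrow> L2_norm (P w) \<le> g * L2_norm w"
    using stable_gain[OF \<open>stable P\<close>] by blast
  have "L2_norm (trunc T (P v)) \<le> eps" if "0 < eps" for eps
  proof -
    define d where "d = eps / (g + 1)"
    have "0 < d"
      using that \<open>0 \<le> g\<close> by (simp add: d_def)
    then obtain w where "w \<in> L2p" "trunc T w = v" "L2_norm w = d"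
      using null_signal_extension[OF v \<open>0 \<le> T\<close>] by blast
    then have "trunc T (P v) = trunc T (P w)"
      using stable_causalD[OF \<open>stable P\<close> \<open>0 \<le> T\<close> L2p_imp_L2ep[OF \<open>w \<in> L2p\<close>]] by simp
    then have "L2_norm (trunc T (P v)) \<le> L2_norm (P w)"
      using L2_norm_trunc_le[OF stable_L2[OF \<open>stable P\<close> \<open>w \<in> L2p\<close>]] by simp
    also have "\<dots> \<le> g * d"
      using gain \<open>w \<in> L2p\<close> \<open>L2_norm w = d\<close> \<open>0 < d\<close> by force
    also have "\<dots> \<le> eps"
      using that \<open>0 \<le> g\<close> by (simp add: d_def field_simps)
    finally show ?thesis .
  qed
  then have "L2_norm (trunc T (P v)) \<le> 0"
    by (rule field_le_epsilon) simp
  then show ?thesis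
    using L2_norm_nonneg[of "trunc T (P v)"] by simp
qed

lemma stable_trunc_gain:
  fixes P :: "'n::finite signal \<Rightarrow> 'n signal"
  assumes "stable P"
  shows "\<exists>g\<ge>0. \<forall>u\<in>L2ep. \<forall>T\<ge>0. L2_norm (trunc T (P u)) \<le> g * L2_norm (trunc T u)"
proof -
  obtain g where "0 \<le> g" and gain: "\<forall>w\<in>L2p. L2_norm w \<noteq> 0 \<longrightarrow> L2_norm (P w) \<le> g * L2_norm w"
    using stable_gain[OF assms] by blast
  have "L2_norm (trunc T (P u)) \<le> g * L2_norm (trunc T u)" if u: "u \<in> L2ep" and "0 \<le> T" for u T
  proof -
    define v where "v = trunc T u"
    have "v \<in> L2p"
      using u \<open>0 \<le> T\<close> by (simp add: L2ep_def v_def)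
    have causal: "trunc T (P u) = trunc T (P v)"
      unfolding v_def by (rule stable_causalD[OF assms \<open>0 \<le> T\<close> u])
    show ?thesis
    proof (cases "L2_norm v = 0")
      case True
      have "trunc T v = v"
        by (simp add: v_def trunc_def fun_eq_iff)
      then show ?thesis
        using stable_trunc_output_null_input[OF assms \<open>v \<in> L2p\<close> _ True \<open>0 \<le> T\<close>] True
        by (simp add: causal v_def)
    next
      case False
      have "L2_norm (trunc T (P v)) \<le> L2_norm (P v)"
        by (rule L2_norm_trunc_le[OF stable_L2[OF assms \<open>v \<in> L2p\<close>]])
      also have "\<dots> \<le> g * L2_norm v"
        using gain \<open>v \<in> L2p\<close> False by blast
      finally show ?thesis
        by (simp add: causal v_def)
    qed
  qed
  with \<open>0 \<le> g\<close> show ?thesis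
    by blast
qed

definition angle_cosines :: "('n::finite signal \<Rightarrow> 'n signal) \<Rightarrow> real set" where
  "angle_cosines P =
    {L2_inner (trunc T u) (trunc T (P u)) / (L2_norm (trunc T u) * L2_norm (trunc T (P u))) | u T.
       u \<in> L2ep \<and> T > 0 \<and> L2_norm (trunc T u) \<noteq> 0 \<and> L2_norm (trunc T (P u)) \<noteq> 0}"

lemma singular_angle_e_eq: "singular_angle_e P = arccos (Inf (angle_cosines P))"
  by (simp add: singular_angle_e_def angle_cosines_def)

lemma L2_angle_le_singular_angle_e:
  fixes P :: "'n::finite signal \<Rightarrow> 'n signal"
  assumes "is_system P" and u: "u \<in> L2ep" and "0 < T"
    and nonzero: "L2_norm (trunc T u) \<noteq> 0" "L2_norm (trunc T (P u)) \<noteq> 0"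
  shows "L2_angle (trunc T u) (trunc T (P u)) \<le> singular_angle_e P"
proof -
  have bounded: "\<bar>s\<bar> \<le> 1" if "s \<in> angle_cosines P" for s
    using that \<open>is_system P\<close> by (auto simp: angle_cosines_def is_system_def intro!: L2_cos_bounded L2ep_trunc_L2)
  define s where "s = L2_inner (trunc T u) (trunc T (P u)) / (L2_norm (trunc T u) * L2_norm (trunc T (P u)))"
  have "s \<in> angle_cosines P"
    using u \<open>0 < T\<close> nonzero unfolding angle_cosines_def s_def by blast
  moreover have "bdd_below (angle_cosines P)"
    using bounded by (intro bdd_belowI[where m = "-1"]) (auto simp: abs_le_iff)
  ultimately have "Inf (angle_cosines P) \<le> s"
    by (rule cInf_lower)
  moreover have "-1 \<le> Inf (angle_cosines P)"
    using \<open>s \<in> angle_cosines P\<close> bounded by (intro cInf_greatest) (auto simp: abs_le_iff)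
  ultimately have "arccos s \<le> arccos (Inf (angle_cosines P))"
    using bounded[OF \<open>s \<in> angle_cosines P\<close>] by (intro arccos_le_arccos) (auto simp: abs_le_iff)
  then show ?thesis
    by (simp add: singular_angle_e_eq L2_angle_def s_def)
qed

lemma singular_angle_e_nonneg:
  fixes P :: "'n::finite signal \<Rightarrow> 'n signal"
  assumes "is_system P" "stable P"
  shows "0 \<le> singular_angle_e P"
proof -
  obtain u T where u: "u \<in> L2ep" and "0 \<le> T" and "L2_norm (trunc T (P u)) \<noteq> 0"
    using \<open>is_system P\<close> by (auto simp: is_system_def)
  obtain g where gain: "\<forall>u\<in>L2ep. \<forall>T\<ge>0. L2_norm (trunc T (P u)) \<le> g * L2_norm (trunc T u)"
    using stable_trunc_gain[OF \<open>stable P\<close>] by blast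
  have "L2_norm (trunc T u) \<noteq> 0"
    using gain u \<open>0 \<le> T\<close> \<open>L2_norm (trunc T (P u)) \<noteq> 0\<close> L2_norm_nonneg[of "trunc T (P u)"]
    by (metis antisym mult_zero_right)
  moreover have "0 < T"
    using \<open>0 \<le> T\<close> L2_norm_trunc_0[OF u] calculation by (cases "T = 0") auto
  moreover have "P u \<in> L2ep"
    using \<open>is_system P\<close> u by (simp add: is_system_def)
  ultimately have "0 \<le> L2_angle (trunc T u) (trunc T (P u))"
    and "L2_angle (trunc T u) (trunc T (P u)) \<le> singular_angle_e P"
    using L2_angle_le_singular_angle_e[OF \<open>is_system P\<close> u] \<open>L2_norm (trunc T (P u)) \<noteq> 0\<close>
      L2_angle_nonneg[OF L2ep_trunc_L2[OF u \<open>0 \<le> T\<close>] L2ep_trunc_L2[OF _ \<open>0 \<le> T\<close>]]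
    by simp_all
  then show ?thesis
    by linarith
qed

lemma feedback_inner_lower_bound:
  fixes P C :: "'n::finite signal \<Rightarrow> 'n signal"
  assumes "is_system P" "is_system C" "stable C"
    and u: "u \<in> L2ep" and "0 \<le> T"
    and angles: "singular_angle_e P + singular_angle_e C \<le> pi"
  shows "cos (singular_angle_e P + singular_angle_e C) * (L2_norm (trunc T u) * L2_norm (trunc T (C (P u))))
    \<le> L2_inner (trunc T u) (trunc T (C (P u)))"
proof -
  define a b c where "a = trunc T u" and "b = trunc T (P u)" and "c = trunc T (C (P u))"
  have "P u \<in> L2ep" "C (P u) \<in> L2ep"
    using assms u by (simp_all add: is_system_def)
  then have a: "a \<in> L2" and b: "b \<in> L2" and c: "c \<in> L2"
    using u \<open>0 \<le> T\<close> by (simp_all add: a_def b_def c_def L2ep_trunc_L2)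
  show ?thesis
  proof (cases "L2_norm a = 0 \<or> L2_norm c = 0")
    case True
    then show ?thesis
      using L2_Cauchy_Schwarz_abs[OF a c] by (auto simp: a_def c_def)
  next
    case False
    obtain g where "\<forall>u\<in>L2ep. \<forall>T\<ge>0. L2_norm (trunc T (C u)) \<le> g * L2_norm (trunc T u)"
      using stable_trunc_gain[OF \<open>stable C\<close>] by blast
    then have "L2_norm c \<le> g * L2_norm b"
      using \<open>P u \<in> L2ep\<close> \<open>0 \<le> T\<close> by (simp add: b_def c_def)
    then have "L2_norm b \<noteq> 0"
      using False L2_norm_nonneg[of c] by auto
    have "0 < T"
      using \<open>0 \<le> T\<close> L2_norm_trunc_0[OF u] False by (cases "T = 0") (auto simp: a_def)
    have "L2_angle a b \<le> singular_angle_e P"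
      using L2_angle_le_singular_angle_e[OF \<open>is_system P\<close> u \<open>0 < T\<close>] False \<open>L2_norm b \<noteq> 0\<close>
      by (simp add: a_def b_def)
    moreover have "L2_angle b c \<le> singular_angle_e C"
      using L2_angle_le_singular_angle_e[OF \<open>is_system C\<close> \<open>P u \<in> L2ep\<close> \<open>0 < T\<close>] False \<open>L2_norm b \<noteq> 0\<close>
      by (simp add: b_def c_def)
    moreover have "L2_angle a c \<le> L2_angle a b + L2_angle b c"
      using False \<open>L2_norm b \<noteq> 0\<close> by (intro L2_angle_triangle[OF a b c]) auto
    ultimately have "L2_angle a c \<le> singular_angle_e P + singular_angle_e C"
      by linarith
    from L2_inner_ge_cos_mul_norm[OF a c this angles] show ?thesis
      by (simp add: a_def c_def)
  qed
qed

lemma cosine_law_lower_bound: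
  fixes A C Z d :: real
  assumes "0 \<le> A" "0 \<le> C" "-1 \<le> d" and inner: "d * (A * C) \<le> Z"
  shows "min 1 (1 + d) * A\<^sup>2 \<le> A\<^sup>2 + 2 * Z + C\<^sup>2"
proof (cases "0 \<le> d")
  case True
  then have "0 \<le> Z"
    using inner assms(1,2) by (meson mult_nonneg_nonneg order_trans)
  moreover have "min 1 (1 + d) = 1"
    using True by simp
  ultimately show ?thesis
    by simp
next
  case False
  have "2 * (A * C) \<le> A\<^sup>2 + C\<^sup>2"
    using zero_le_power2[of "A - C"] by (simp add: power2_diff)
  then have "(1 + d) * A\<^sup>2 + (1 + d) * C\<^sup>2 \<le> A\<^sup>2 + 2 * Z + C\<^sup>2"
    using False inner mult_left_mono_neg[of "2 * (A * C)" "A\<^sup>2 + C\<^sup>2" d] by (simp add: algebra_simps)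
  moreover have "0 \<le> (1 + d) * C\<^sup>2"
    using \<open>-1 \<le> d\<close> by simp
  ultimately show ?thesis
    using False by (simp add: min_def)
qed

lemma feedback_trunc_lower_bound:
  fixes P C :: "'n::finite signal \<Rightarrow> 'n signal"
  assumes "is_system P" "is_system C" "stable C"
    and u: "u \<in> L2ep" and "0 \<le> T"
    and angles: "singular_angle_e P + singular_angle_e C \<le> pi"
  shows "min 1 (1 + cos (singular_angle_e P + singular_angle_e C)) * (L2_norm (trunc T u))\<^sup>2
    \<le> (L2_norm (trunc T (\<lambda>t. u t + C (P u) t)))\<^sup>2"
proof -
  have "P u \<in> L2ep" "C (P u) \<in> L2ep"
    using assms u by (simp_all add: is_system_def)
  then have "trunc T u \<in> L2" "trunc T (C (P u)) \<in> L2"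
    using u \<open>0 \<le> T\<close> by (simp_all add: L2ep_trunc_L2)
  then show ?thesis
    unfolding trunc_add L2_norm_add_power2[OF \<open>trunc T u \<in> L2\<close> \<open>trunc T (C (P u)) \<in> L2\<close>]
    using feedback_inner_lower_bound[OF assms] by (intro cosine_law_lower_bound) (simp_all add: L2_norm_nonneg)
qed

lemma sqrt_sum_squares_le:
  fixes A B E g k :: real
  assumes "0 \<le> A" "0 \<le> B" "B \<le> g * A" "0 < k" "k * A\<^sup>2 \<le> E\<^sup>2" "0 \<le> E"
  shows "sqrt (A\<^sup>2 + B\<^sup>2) \<le> sqrt ((1 + g\<^sup>2) / k) * E"
proof -
  have "B\<^sup>2 \<le> g\<^sup>2 * A\<^sup>2"
    using power_mono[OF \<open>B \<le> g * A\<close> \<open>0 \<le> B\<close>] by (simp add: power_mult_distrib)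
  then have "A\<^sup>2 + B\<^sup>2 \<le> (1 + g\<^sup>2) * A\<^sup>2"
    by (simp add: algebra_simps)
  also have "\<dots> \<le> (1 + g\<^sup>2) * (E\<^sup>2 / k)"
    using assms(4,5) by (intro mult_left_mono) (simp_all add: le_divide_eq mult.commute)
  also have "\<dots> = (1 + g\<^sup>2) / k * E\<^sup>2"
    by simp
  finally have "sqrt (A\<^sup>2 + B\<^sup>2) \<le> sqrt ((1 + g\<^sup>2) / k * E\<^sup>2)"
    by (rule real_sqrt_le_mono)
  also have "\<dots> = sqrt ((1 + g\<^sup>2) / k) * E"
    using \<open>0 \<le> E\<close> by (subst real_sqrt_mult) simp
  finally show ?thesis .
qed

lemma min_1_add_cos_pos:
  assumes "0 \<le> \<theta>" "\<theta> < pi"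
  shows "0 < min 1 (1 + cos \<theta>)"
proof -
  have "cos pi < cos \<theta>"
    using assms by (intro cos_monotone_0_pi) simp_all
  then show ?thesis
    by simp
qed

lemma feedback_loop_trunc_bound:
  fixes P C :: "'n::finite signal \<Rightarrow> 'n signal"
  assumes "is_system P" "is_system C" "stable C"
    and angles: "singular_angle_e P + singular_angle_e C \<le> pi"
    and gain: "\<forall>u\<in>L2ep. \<forall>T\<ge>0. L2_norm (trunc T (P u)) \<le> g * L2_norm (trunc T u)"
    and k: "k = min 1 (1 + cos (singular_angle_e P + singular_angle_e C))" "0 < k"
    and u: "u \<in> L2ep" and "0 \<le> T"
  shows "L2_norm2 (trunc2 T (u, P u))
    \<le> sqrt ((1 + g\<^sup>2) / k) * L2_norm2 (trunc2 T (\<lambda>t. u t + C (P u) t, \<lambda>t. 0))"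
proof -
  define A B E where "A = L2_norm (trunc T u)" and "B = L2_norm (trunc T (P u))"
    and "E = L2_norm (trunc T (\<lambda>t. u t + C (P u) t))"
  have "k * A\<^sup>2 \<le> E\<^sup>2"
    unfolding k(1) A_def E_def by (rule feedback_trunc_lower_bound[OF assms(1-3) u \<open>0 \<le> T\<close> angles])
  moreover have "B \<le> g * A"
    using gain u \<open>0 \<le> T\<close> by (simp add: A_def B_def)
  ultimately have "sqrt (A\<^sup>2 + B\<^sup>2) \<le> sqrt ((1 + g\<^sup>2) / k) * E"
    using \<open>0 < k\<close> by (intro sqrt_sum_squares_le) (simp_all add: A_def B_def E_def L2_norm_nonneg)
  moreover have "trunc T (\<lambda>t. 0 :: real^'n) = (\<lambda>t. 0)"
    by (simp add: trunc_def fun_eq_iff)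
  ultimately show ?thesis
    by (simp add: L2_norm2_def trunc2_def A_def B_def E_def L2_norm_nonneg L2_norm_def[of "\<lambda>t. 0"])
qed

theorem corollary5:
  fixes P C :: "'n::finite signal \<Rightarrow> 'n signal"
  assumes "is_system P" and "is_system C"
    and "stable P" and "stable C"
    and "well_posed P C"
    and "singular_angle_e P + singular_angle_e C < pi"
  shows "stable_e2_zero P C"
proof -
  obtain g where gain: "\<forall>u\<in>L2ep. \<forall>T\<ge>0. L2_norm (trunc T (P u)) \<le> g * L2_norm (trunc T u)"
    using stable_trunc_gain[OF \<open>stable P\<close>] by blast
  define k where "k = min 1 (1 + cos (singular_angle_e P + singular_angle_e C))"
  have "0 < k"
    unfolding k_def using assms(6) singular_angle_e_nonneg[OF assms(1,3)] singular_angle_e_nonneg[OF assms(2,4)]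
    by (intro min_1_add_cos_pos) simp_all
  show ?thesis
    unfolding stable_e2_zero_def
  proof (intro exI[of _ "sqrt ((1 + g\<^sup>2) / k)"] conjI allI impI)
    show "0 < sqrt ((1 + g\<^sup>2) / k)"
      using \<open>0 < k\<close> by (simp add: add_pos_nonneg)
    fix T :: real and e1 u1 u2 :: "'n signal"
    assume "0 \<le> T" and loop: "e1 \<in> L2ep \<and> u1 \<in> L2ep \<and> u2 \<in> L2ep
      \<and> e1 = (\<lambda>t. u1 t + C u2 t) \<and> (\<lambda>t. 0) = (\<lambda>t. u2 t - P u1 t)"
    then have "u1 \<in> L2ep" and "u2 = P u1"
      by (auto simp: fun_eq_iff)
    moreover have "e1 = (\<lambda>t. u1 t + C u2 t)"
      using loop by blast
    ultimately show "L2_norm2 (trunc2 T (u1, u2)) \<le> sqrt ((1 + g\<^sup>2) / k) * L2_norm2 (trunc2 T (e1, \<lambda>t. 0))"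
      using feedback_loop_trunc_bound[OF assms(1,2,4) less_imp_le[OF assms(6)] gain k_def \<open>0 < k\<close> _ \<open>0 \<le> T\<close>]
      by simp
  qed
qed

end
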